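(* Let $\alpha,\beta,\gamma,\delta\in\mathbb{R}$ with $\alpha+\delta\neq 0$ and $\alpha\gamma=0$, and let $G_7$ be the connected, simply connected Lie group whose Lie algebra $\mathfrak{g}_7$ has a basis $\{e_1,e_2,e_3\}$ with $[e_1,e_2]=-\alpha e_1-\beta e_2-\beta e_3$, $[e_1,e_3]=\alpha e_1+\beta e_2+\beta e_3$, $[e_2,e_3]=\gamma e_1+\delta e_2+\delta e_3$, equipped with the left-invariant Lorentzian metric $g$ for which $\{e_1,e_2,e_3\}$ is pseudo-orthonormal with $e_3$ timelike. Let $\lambda_0,c\in\mathbb{R}$. Then there exists a derivation $D$ of $\mathfrak{g}_7$ with $\mathrm{Ric}=(s\lambda_0+c)\mathrm{Id}+D$ (i.e. $(G_7,g)$ is an algebraic Schouten soliton associated to the Levi-Civita connection) if and only if $\gamma=0$ and $c=0$.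
   Context: Pseudo-orthonormal means $g(e_1,e_1)=g(e_2,e_2)=1$, $g(e_3,e_3)=-1$, $g(e_i,e_j)=0$ for $i\neq j$; left-invariant tensors are identified with their values on $\mathfrak{g}$. $\nabla$ is the Levi-Civita connection of $g$, with curvature $R(X,Y)Z=\nabla_X\nabla_YZ-\nabla_Y\nabla_XZ-\nabla_{[X,Y]}Z$. The Ricci tensor is $\rho(X,Y)=-g(R(X,e_1)Y,e_1)-g(R(X,e_2)Y,e_2)+g(R(X,e_3)Y,e_3)$, the Ricci operator $\mathrm{Ric}$ is defined by $\rho(X,Y)=g(\mathrm{Ric}(X),Y)$, and the scalar curvature is $s=\rho(e_1,e_1)+\rho(e_2,e_2)-\rho(e_3,e_3)$. A derivation of $\mathfrak{g}$ is a linear map $D:\mathfrak{g}\to\mathfrak{g}$ with $D[X,Y]=[DX,Y]+[X,DY]$ for all $X,Y\in\mathfrak{g}$. $(G,g)$ is called an algebraic Schouten soliton associated to $\nabla$ (with real constants $\lambda_0$, $c$) if $\mathrm{Ric}=(s\lambda_0+c)\mathrm{Id}+D$ for some derivation $D$. *)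

theory Defs
  imports "HOL-Analysis.Analysis"
begin

text \<open>The three-dimensional Lie algebra is modelled as real^3; left-invariant
tensors are identified with their values on the Lie algebra.
Basis vectors e 1, e 2, e 3 are the standard axes.\<close>

type_synonym vec3 = "real ^ 3"

definition e :: "3 \<Rightarrow> vec3" where
  "e i = axis i 1"

definition gL :: "vec3 \<Rightarrow> vec3 \<Rightarrow> real" where
  "gL X Y = X$1 * Y$1 + X$2 * Y$2 - X$3 * Y$3"

definition br7 :: "real \<Rightarrow> real \<Rightarrow> real \<Rightarrow> real \<Rightarrow> vec3 \<Rightarrow> vec3 \<Rightarrow> vec3" where
  "br7 \<alpha> \<beta> \<gamma> \<delta> X Y =
     (X$1 * Y$2 - X$2 * Y$1) *\<^sub>R ((-\<alpha>) *\<^sub>R e 1 - \<beta> *\<^sub>R e 2 - \<beta> *\<^sub>R e 3)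
   + (X$1 * Y$3 - X$3 * Y$1) *\<^sub>R (\<alpha> *\<^sub>R e 1 + \<beta> *\<^sub>R e 2 + \<beta> *\<^sub>R e 3)
   + (X$2 * Y$3 - X$3 * Y$2) *\<^sub>R (\<gamma> *\<^sub>R e 1 + \<delta> *\<^sub>R e 2 + \<delta> *\<^sub>R e 3)"

text \<open>Levi-Civita connection of a left-invariant metric, via the Koszul formula
  g(nabla_X Y, Z) = 1/2 (g([X,Y],Z) - g([Y,Z],X) + g([Z,X],Y)).\<close>
definition LC :: "(vec3 \<Rightarrow> vec3 \<Rightarrow> vec3) \<Rightarrow> vec3 \<Rightarrow> vec3 \<Rightarrow> vec3" where
  "LC br X Y = (THE V. \<forall>Z. gL V Z =
       (gL (br X Y) Z - gL (br Y Z) X + gL (br Z X) Y) / 2)"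

definition curv :: "(vec3 \<Rightarrow> vec3 \<Rightarrow> vec3) \<Rightarrow> vec3 \<Rightarrow> vec3 \<Rightarrow> vec3 \<Rightarrow> vec3" where
  "curv br X Y Z = LC br X (LC br Y Z) - LC br Y (LC br X Z) - LC br (br X Y) Z"

definition ricci :: "(vec3 \<Rightarrow> vec3 \<Rightarrow> vec3) \<Rightarrow> vec3 \<Rightarrow> vec3 \<Rightarrow> real" where
  "ricci br X Y = - gL (curv br X (e 1) Y) (e 1) - gL (curv br X (e 2) Y) (e 2)
                  + gL (curv br X (e 3) Y) (e 3)"

definition RicOp :: "(vec3 \<Rightarrow> vec3 \<Rightarrow> vec3) \<Rightarrow> vec3 \<Rightarrow> vec3" where
  "RicOp br X = (THE V. \<forall>Y. ricci br X Y = gL V Y)"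

definition scal :: "(vec3 \<Rightarrow> vec3 \<Rightarrow> vec3) \<Rightarrow> real" where
  "scal br = ricci br (e 1) (e 1) + ricci br (e 2) (e 2) - ricci br (e 3) (e 3)"

definition is_derivation :: "(vec3 \<Rightarrow> vec3 \<Rightarrow> vec3) \<Rightarrow> (vec3 \<Rightarrow> vec3) \<Rightarrow> bool" where
  "is_derivation br D \<longleftrightarrow> linear D \<and> (\<forall>X Y. D (br X Y) = br (D X) Y + br X (D Y))"

definition algebraic_schouten_soliton ::
  "(vec3 \<Rightarrow> vec3 \<Rightarrow> vec3) \<Rightarrow> real \<Rightarrow> real \<Rightarrow> bool" where
  "algebraic_schouten_soliton br lam0 c \<longleftrightarrow>
     (\<exists>D. is_derivation br D \<and> RicOp br = (\<lambda>X. (scal br * lam0 + c) *\<^sub>R X + D X))"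

end

theory Submission
  imports Defs
begin

text \<open>The Koszul formula and the Ricci tensor of \<open>g\<^sub>7\<close> are computed in coordinates; the
scalar curvature is \<open>\<gamma>\<^sup>2/2\<close>. A soliton exists iff \<open>Ric - k Id\<close> is a derivation, where
\<open>k = s\<lambda>\<^sub>0 + c\<close>. Testing the derivation identity on the pairs \<open>(e\<^sub>1,e\<^sub>2)\<close> and \<open>(e\<^sub>2,e\<^sub>3)\<close>
gives three polynomial constraints; using \<open>\<alpha>\<gamma> = 0\<close> and \<open>\<alpha> + \<delta> \<noteq> 0\<close> they force \<open>\<gamma> = 0\<close>
and then \<open>k = 0\<close>, i.e. \<open>c = 0\<close>. Conversely, for \<open>\<gamma> = 0\<close> the Ricci operator itself is a
derivation.\<close>

lemma e_components [simp]:
  "e 1 $ 1 = 1" "e 1 $ 2 = 0" "e 1 $ 3 = 0"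
  "e 2 $ 1 = 0" "e 2 $ 2 = 1" "e 2 $ 3 = 0"
  "e 3 $ 1 = 0" "e 3 $ 2 = 0" "e 3 $ 3 = 1"
  by (simp_all add: e_def axis_def)

lemma the_gL_representer:
  assumes "\<forall>Z. f Z = Z$1 * a + Z$2 * b + Z$3 * c"
  shows "(THE V. \<forall>Z. gL V Z = f Z) = vector [a, b, -c]"
proof (rule the_equality)
  show "\<forall>Z. gL (vector [a, b, - c]) Z = f Z"
    using assms by (simp add: gL_def algebra_simps)
next
  fix V assume represents: "\<forall>Z. gL V Z = f Z"
  have "V$1 = a" "V$2 = b" "V$3 = -c"
    using represents[rule_format, of "e 1"] represents[rule_format, of "e 2"]
      represents[rule_format, of "e 3"] assms
    by (simp_all add: gL_def)
  then show "V = vector [a, b, -c]"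
    by (simp add: vec_eq_iff forall_3)
qed

lemma soliton_iff_shifted_derivation:
  "(\<exists>D. is_derivation br D \<and> R = (\<lambda>X. k *\<^sub>R X + D X))
     \<longleftrightarrow> is_derivation br (\<lambda>X. R X - k *\<^sub>R X)"
proof
  assume "\<exists>D. is_derivation br D \<and> R = (\<lambda>X. k *\<^sub>R X + D X)"
  then obtain D where "is_derivation br D" and "R = (\<lambda>X. k *\<^sub>R X + D X)"
    by blast
  moreover from \<open>R = _\<close> have "(\<lambda>X. R X - k *\<^sub>R X) = D"
    by auto
  ultimately show "is_derivation br (\<lambda>X. R X - k *\<^sub>R X)"
    by simp
next
  assume "is_derivation br (\<lambda>X. R X - k *\<^sub>R X)"
  then show "\<exists>D. is_derivation br D \<and> R = (\<lambda>X. k *\<^sub>R X + D X)"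
    by (intro exI[of _ "\<lambda>X. R X - k *\<^sub>R X"]) auto
qed

lemma br7_components [simp]:
  "br7 \<alpha> \<beta> \<gamma> \<delta> X Y $ 1 = (X$1 * Y$2 - X$2 * Y$1) * (-\<alpha>) + (X$1 * Y$3 - X$3 * Y$1) * \<alpha>
     + (X$2 * Y$3 - X$3 * Y$2) * \<gamma>"
  "br7 \<alpha> \<beta> \<gamma> \<delta> X Y $ 2 = (X$1 * Y$2 - X$2 * Y$1) * (-\<beta>) + (X$1 * Y$3 - X$3 * Y$1) * \<beta>
     + (X$2 * Y$3 - X$3 * Y$2) * \<delta>"
  "br7 \<alpha> \<beta> \<gamma> \<delta> X Y $ 3 = (X$1 * Y$2 - X$2 * Y$1) * (-\<beta>) + (X$1 * Y$3 - X$3 * Y$1) * \<beta>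
     + (X$2 * Y$3 - X$3 * Y$2) * \<delta>"
  by (simp_all add: br7_def algebra_simps)

definition koszul :: "(vec3 \<Rightarrow> vec3 \<Rightarrow> vec3) \<Rightarrow> vec3 \<Rightarrow> vec3 \<Rightarrow> vec3 \<Rightarrow> real" where
  "koszul br X Y Z = (gL (br X Y) Z - gL (br Y Z) X + gL (br Z X) Y) / 2"

lemma LC_br7_components [simp]:
  "LC (br7 \<alpha> \<beta> \<gamma> \<delta>) X Y $ 1 = koszul (br7 \<alpha> \<beta> \<gamma> \<delta>) X Y (e 1)"
  "LC (br7 \<alpha> \<beta> \<gamma> \<delta>) X Y $ 2 = koszul (br7 \<alpha> \<beta> \<gamma> \<delta>) X Y (e 2)"
  "LC (br7 \<alpha> \<beta> \<gamma> \<delta>) X Y $ 3 = - koszul (br7 \<alpha> \<beta> \<gamma> \<delta>) X Y (e 3)"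
proof -
  have "LC (br7 \<alpha> \<beta> \<gamma> \<delta>) X Y = vector [koszul (br7 \<alpha> \<beta> \<gamma> \<delta>) X Y (e 1),
      koszul (br7 \<alpha> \<beta> \<gamma> \<delta>) X Y (e 2), - koszul (br7 \<alpha> \<beta> \<gamma> \<delta>) X Y (e 3)]"
    unfolding LC_def koszul_def[symmetric]
    by (rule the_gL_representer) (simp add: koszul_def gL_def field_simps; algebra)
  then show "LC (br7 \<alpha> \<beta> \<gamma> \<delta>) X Y $ 1 = koszul (br7 \<alpha> \<beta> \<gamma> \<delta>) X Y (e 1)"
    and "LC (br7 \<alpha> \<beta> \<gamma> \<delta>) X Y $ 2 = koszul (br7 \<alpha> \<beta> \<gamma> \<delta>) X Y (e 2)"
    and "LC (br7 \<alpha> \<beta> \<gamma> \<delta>) X Y $ 3 = - koszul (br7 \<alpha> \<beta> \<gamma> \<delta>) X Y (e 3)"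
    by simp_all
qed

definition ricci7 :: "real \<Rightarrow> real \<Rightarrow> real \<Rightarrow> real \<Rightarrow> vec3 \<Rightarrow> vec3 \<Rightarrow> real" where
  "ricci7 \<alpha> \<beta> \<gamma> \<delta> X Y =
     X$1 * Y$1 * (- \<gamma>\<^sup>2 / 2)
   + (X$1 * Y$2 + X$2 * Y$1) * (\<alpha> * \<gamma>)
   - (X$1 * Y$3 + X$3 * Y$1) * (\<alpha> * \<gamma>)
   + X$2 * Y$2 * (\<gamma>\<^sup>2 / 2 - \<beta> * \<gamma> + \<alpha> * \<delta> - \<alpha>\<^sup>2)
   + (X$2 * Y$3 + X$3 * Y$2) * (\<beta> * \<gamma> - \<alpha> * \<delta> + \<alpha>\<^sup>2)
   + X$3 * Y$3 * (- \<gamma>\<^sup>2 / 2 - \<beta> * \<gamma> + \<alpha> * \<delta> - \<alpha>\<^sup>2)"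

lemma ricci_br7: "ricci (br7 \<alpha> \<beta> \<gamma> \<delta>) X Y = ricci7 \<alpha> \<beta> \<gamma> \<delta> X Y"
  unfolding ricci_def curv_def ricci7_def
  by (simp add: gL_def koszul_def field_simps power2_eq_square)

lemma RicOp_br7:
  "RicOp (br7 \<alpha> \<beta> \<gamma> \<delta>) X
     = vector [ricci7 \<alpha> \<beta> \<gamma> \<delta> X (e 1), ricci7 \<alpha> \<beta> \<gamma> \<delta> X (e 2), - ricci7 \<alpha> \<beta> \<gamma> \<delta> X (e 3)]"
  unfolding RicOp_def ricci_br7 eq_commute[of "ricci7 \<alpha> \<beta> \<gamma> \<delta> X _"]
  by (rule the_gL_representer) (simp add: ricci7_def algebra_simps)

lemma scal_br7: "scal (br7 \<alpha> \<beta> \<gamma> \<delta>) = \<gamma>\<^sup>2 / 2"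
  unfolding scal_def ricci_br7 by (simp add: ricci7_def)

lemma shifted_RicOp_br7_derivation_constraints:
  assumes "is_derivation (br7 \<alpha> \<beta> \<gamma> \<delta>) (\<lambda>X. RicOp (br7 \<alpha> \<beta> \<gamma> \<delta>) X - k *\<^sub>R X)"
  shows "\<alpha> * (3/2 * \<gamma>\<^sup>2 - k) = 0"
    and "\<gamma> * (k - 3/2 * \<gamma>\<^sup>2) = 0"
    and "\<alpha> * \<gamma>\<^sup>2 + \<delta> * (k - \<gamma>\<^sup>2 / 2) = 0"
proof -
  let ?b = "br7 \<alpha> \<beta> \<gamma> \<delta>"
  let ?D = "\<lambda>X. RicOp ?b X - k *\<^sub>R X"
  have leibniz: "?D (?b X Y) - ?b (?D X) Y - ?b X (?D Y) = 0" for X Y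
    using assms unfolding is_derivation_def by simp
  show "\<alpha> * (3/2 * \<gamma>\<^sup>2 - k) = 0"
    using arg_cong[OF leibniz[of "e 1" "e 2"], of "\<lambda>v. v$1"]
    by (simp add: RicOp_br7 ricci7_def field_simps power2_eq_square)
  show "\<gamma> * (k - 3/2 * \<gamma>\<^sup>2) = 0"
    using arg_cong[OF leibniz[of "e 2" "e 3"], of "\<lambda>v. v$1"]
    by (simp add: RicOp_br7 ricci7_def field_simps power2_eq_square)
  show "\<alpha> * \<gamma>\<^sup>2 + \<delta> * (k - \<gamma>\<^sup>2 / 2) = 0"
    using arg_cong[OF leibniz[of "e 2" "e 3"], of "\<lambda>v. v$2"]
    by (simp add: RicOp_br7 ricci7_def field_simps power2_eq_square)
qed

lemma RicOp_br7_is_derivation: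
  "is_derivation (br7 \<alpha> \<beta> 0 \<delta>) (RicOp (br7 \<alpha> \<beta> 0 \<delta>))"
  unfolding is_derivation_def
proof
  show "linear (RicOp (br7 \<alpha> \<beta> 0 \<delta>))"
    by (rule linearI) (simp_all add: RicOp_br7 ricci7_def vec_eq_iff forall_3 algebra_simps)
  show "\<forall>X Y. RicOp (br7 \<alpha> \<beta> 0 \<delta>) (br7 \<alpha> \<beta> 0 \<delta> X Y)
      = br7 \<alpha> \<beta> 0 \<delta> (RicOp (br7 \<alpha> \<beta> 0 \<delta>) X) Y + br7 \<alpha> \<beta> 0 \<delta> X (RicOp (br7 \<alpha> \<beta> 0 \<delta>) Y)"
    by (simp add: RicOp_br7 ricci7_def vec_eq_iff forall_3 algebra_simps)
qed

theorem theorem3p8: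
  fixes \<alpha> \<beta> \<gamma> \<delta> lam0 c :: real
  assumes "\<alpha> + \<delta> \<noteq> 0" and "\<alpha> * \<gamma> = 0"
  shows "(\<exists>D. is_derivation (br7 \<alpha> \<beta> \<gamma> \<delta>) D \<and>
            RicOp (br7 \<alpha> \<beta> \<gamma> \<delta>) =
              (\<lambda>X. (scal (br7 \<alpha> \<beta> \<gamma> \<delta>) * lam0 + c) *\<^sub>R X + D X))
         \<longleftrightarrow> (\<gamma> = 0 \<and> c = 0)"
  unfolding soliton_iff_shifted_derivation scal_br7
proof
  let ?k = "\<gamma>\<^sup>2 / 2 * lam0 + c"
  assume der: "is_derivation (br7 \<alpha> \<beta> \<gamma> \<delta>) (\<lambda>X. RicOp (br7 \<alpha> \<beta> \<gamma> \<delta>) X - ?k *\<^sub>R X)"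
  note constraints = shifted_RicOp_br7_derivation_constraints[OF der]
  have "\<gamma> = 0"
  proof (rule ccontr)
    assume "\<gamma> \<noteq> 0"
    with assms(2) constraints(2) have "\<alpha> = 0" and "?k = 3/2 * \<gamma>\<^sup>2"
      by simp_all
    with constraints(3) \<open>\<gamma> \<noteq> 0\<close> have "\<delta> = 0"
      by simp
    with \<open>\<alpha> = 0\<close> assms(1) show False
      by simp
  qed
  with constraints(1,3) have "\<alpha> * c = 0" and "\<delta> * c = 0"
    by simp_all
  then have "(\<alpha> + \<delta>) * c = 0"
    by (simp only: distrib_right)
  with assms(1) \<open>\<gamma> = 0\<close> show "\<gamma> = 0 \<and> c = 0"
    by simp
next
  assume "\<gamma> = 0 \<and> c = 0"
  then show "is_derivation (br7 \<alpha> \<beta> \<gamma> \<delta>)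
      (\<lambda>X. RicOp (br7 \<alpha> \<beta> \<gamma> \<delta>) X - (\<gamma>\<^sup>2 / 2 * lam0 + c) *\<^sub>R X)"
    using RicOp_br7_is_derivation by simp
qed

end
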